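(* Consider the two-party spatial voting game with abstention described in the context, and suppose that the set of active voters is the same at every pair of distinct platforms, i.e. there is a set $W\subseteq V$ such that for all $s,t\in X$ with $s\neq t$, the set of voters active at $(s,t)$ equals $W$. Then no pure-strategy Nash equilibrium $(s,t)$ exhibits mutual leapfrogging, i.e. there is no pure-strategy Nash equilibrium $(s,t)$ with $t<\tau_A<\tau_B<s$.
   Context: Policy space: $X=\{x_j : j\in I\}$ where $I\subseteq\mathbb Z$ is an interval of integers and $x_j<x_{j+1}$; $X$ is linearly ordered by $<$. Parties: two parties $A$ and $B$ with ideal points $\tau_A=x_p$ and $\tau_B=x_q$, where $p<q$. Each party $i\in\{A,B\}$ has a weak preference order $\succeq_i$ on $X$ with unique ideal (most preferred) point $\tau_i$; $x\succ_i y$ means $x\succeq_i y$ and not $y\succeq_i x$. Voters: a finite electorate $V$. Each voter $v\in V$ has an ideal point $\theta_v\in X$, strict preferences over $X$ that are single-peaked with peak $\theta_v$ (if $x_a<x_b\le\theta_v$ then $x_b$ is strictly preferred to $x_a$, and if $\theta_v\le x_b<x_a$ then $x_b$ is strictly preferred to $x_a$), and an attraction interval $A_v\subseteq X$, an interval of the order on $X$ containing $\theta_v$. Election: party $A$ chooses $s\in X$, party $B$ chooses $t\in X$. Voter $v$ is active at $(s,t)$ if $s\in A_v$ or $t\in A_v$. An active voter votes for the platform she strictly prefers and abstains if indifferent (in particular if $s=t$); inactive voters abstain. $N_A(s,t)$ (resp. $N_B(s,t)$) is the number of active voters strictly preferring $s$ to $t$ (resp. $t$ to $s$). The outcome $g(s,t)$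 is $A$ if $N_A>N_B$, $B$ if $N_B>N_A$, and $T$ (tie) if equal. Party objectives (lexicographic): Win $\succ$ Tie $\succ$ Lose for each party (outcome $A$ is a win for $A$ and a loss for $B$, and vice versa); between profiles with the same electoral outcome, $A$ weakly prefers $(s,t)$ to $(s',t')$ iff $s\succeq_A s'$, and $B$ iff $t\succeq_B t'$. A pure-strategy Nash equilibrium is a profile at which neither party has a strictly preferred unilateral deviation. *)

theory Defs
  imports Complex_Main
begin

definition int_interval :: "int set \<Rightarrow> bool" where
  "int_interval I \<longleftrightarrow> (\<forall>i\<in>I. \<forall>k\<in>I. \<forall>j. i \<le> j \<and> j \<le> k \<longrightarrow> j \<in> I)"

definition order_interval :: "real set \<Rightarrow> real set \<Rightarrow> bool" where
  "order_interval X S \<longleftrightarrow> S \<subseteq> X \<and> (\<forall>a\<in>S. \<forall>c\<in>S. \<forall>b\<in>X. a \<le> b \<and> b \<le> c \<longrightarrow> b \<in> S)"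

definition weak_order_on :: "real set \<Rightarrow> (real \<Rightarrow> real \<Rightarrow> bool) \<Rightarrow> bool" where
  "weak_order_on X R \<longleftrightarrow>
     (\<forall>a\<in>X. \<forall>b\<in>X. R a b \<or> R b a) \<and>
     (\<forall>a\<in>X. \<forall>b\<in>X. \<forall>c\<in>X. R a b \<longrightarrow> R b c \<longrightarrow> R a c)"

definition strict_of :: "(real \<Rightarrow> real \<Rightarrow> bool) \<Rightarrow> real \<Rightarrow> real \<Rightarrow> bool" where
  "strict_of R a b \<longleftrightarrow> R a b \<and> \<not> R b a"

definition unique_ideal :: "real set \<Rightarrow> (real \<Rightarrow> real \<Rightarrow> bool) \<Rightarrow> real \<Rightarrow> bool" where
  "unique_ideal X R tau \<longleftrightarrow> tau \<in> X \<and> (\<forall>y\<in>X. y \<noteq> tau \<longrightarrow> strict_of R tau y)"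

definition strict_linear_order_on :: "real set \<Rightarrow> (real \<Rightarrow> real \<Rightarrow> bool) \<Rightarrow> bool" where
  "strict_linear_order_on X P \<longleftrightarrow>
     (\<forall>a\<in>X. \<not> P a a) \<and>
     (\<forall>a\<in>X. \<forall>b\<in>X. \<forall>c\<in>X. P a b \<longrightarrow> P b c \<longrightarrow> P a c) \<and>
     (\<forall>a\<in>X. \<forall>b\<in>X. a \<noteq> b \<longrightarrow> P a b \<or> P b a)"

definition single_peaked :: "real set \<Rightarrow> (real \<Rightarrow> real \<Rightarrow> bool) \<Rightarrow> real \<Rightarrow> bool" where
  "single_peaked X P theta \<longleftrightarrow>
     (\<forall>a\<in>X. \<forall>b\<in>X. a < b \<and> b \<le> theta \<longrightarrow> P b a) \<and>
     (\<forall>a\<in>X. \<forall>b\<in>X. theta \<le> b \<and> b < a \<longrightarrow> P b a)"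

definition active :: "('v \<Rightarrow> real set) \<Rightarrow> real \<Rightarrow> real \<Rightarrow> 'v \<Rightarrow> bool" where
  "active Att s t v \<longleftrightarrow> s \<in> Att v \<or> t \<in> Att v"

definition votesA :: "'v set \<Rightarrow> ('v \<Rightarrow> real set) \<Rightarrow> ('v \<Rightarrow> real \<Rightarrow> real \<Rightarrow> bool) \<Rightarrow> real \<Rightarrow> real \<Rightarrow> nat" where
  "votesA V Att P s t = card {v \<in> V. active Att s t v \<and> P v s t}"

definition votesB :: "'v set \<Rightarrow> ('v \<Rightarrow> real set) \<Rightarrow> ('v \<Rightarrow> real \<Rightarrow> real \<Rightarrow> bool) \<Rightarrow> real \<Rightarrow> real \<Rightarrow> nat" where
  "votesB V Att P s t = card {v \<in> V. active Att s t v \<and> P v t s}"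

datatype outcome = WinA | WinB | Tie

definition result :: "'v set \<Rightarrow> ('v \<Rightarrow> real set) \<Rightarrow> ('v \<Rightarrow> real \<Rightarrow> real \<Rightarrow> bool) \<Rightarrow> real \<Rightarrow> real \<Rightarrow> outcome" where
  "result V Att P s t =
     (if votesA V Att P s t > votesB V Att P s t then WinA
      else if votesB V Att P s t > votesA V Att P s t then WinB else Tie)"

fun rankA :: "outcome \<Rightarrow> nat" where
  "rankA WinA = 2" | "rankA Tie = 1" | "rankA WinB = 0"

fun rankB :: "outcome \<Rightarrow> nat" where
  "rankB WinB = 2" | "rankB Tie = 1" | "rankB WinA = 0"

(* pure-strategy Nash equilibrium with lexicographic objectives *)
definition nash_eq ::
  "real set \<Rightarrow> 'v set \<Rightarrow> ('v \<Rightarrow> real set) \<Rightarrow> ('v \<Rightarrow> real \<Rightarrow> real \<Rightarrow> bool)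
   \<Rightarrow> (real \<Rightarrow> real \<Rightarrow> bool) \<Rightarrow> (real \<Rightarrow> real \<Rightarrow> bool) \<Rightarrow> real \<Rightarrow> real \<Rightarrow> bool" where
  "nash_eq X V Att P RA RB s t \<longleftrightarrow>
     s \<in> X \<and> t \<in> X \<and>
     (\<forall>s'\<in>X. \<not> (rankA (result V Att P s' t) > rankA (result V Att P s t) \<or>
                 (result V Att P s' t = result V Att P s t \<and> strict_of RA s' s))) \<and>
     (\<forall>t'\<in>X. \<not> (rankB (result V Att P s t') > rankB (result V Att P s t) \<or>
                 (result V Att P s t' = result V Att P s t \<and> strict_of RB t' t)))"

end

theory Submission
  imports Defs
begin

(* At a leapfrogging profile t < x p < x q < s, party A can move from s to its ideal x p.
   Since the active electorate is the same at both profiles, single-peakedness means that every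
   voter who preferred s to t now prefers x p to t, and every voter who now prefers t to x p
   already preferred t to s.  So A's electoral outcome does not get worse while A strictly
   prefers the new platform, which contradicts equilibrium. *)

lemma single_peaked_prefer_intermediate:
  assumes R: "strict_linear_order_on X R" and sp: "single_peaked X R theta"
    and X: "a \<in> X" "b \<in> X" "c \<in> X" and "a < b" "b < c" "R c a"
  shows "R b a"
proof (cases "theta \<le> b")
  case True
  with sp X \<open>b < c\<close> have "R b c"
    unfolding single_peaked_def by blast
  with R X \<open>R c a\<close> show ?thesis
    unfolding strict_linear_order_on_def by blast
next
  case False
  with sp X \<open>a < b\<close> show ?thesis
    unfolding single_peaked_def by auto
qed

lemma single_peaked_prefer_over_farther:
  assumes R: "strict_linear_order_on X R" and sp: "single_peaked X R theta"
    and X: "a \<in> X" "b \<in> X" "c \<in> X" and "a < b" "b < c" "R a b"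
  shows "R a c"
proof -
  from R X \<open>R a b\<close> have "\<not> R b a"
    unfolding strict_linear_order_on_def by blast
  then have "\<not> R c a"
    using single_peaked_prefer_intermediate[OF R sp X] \<open>a < b\<close> \<open>b < c\<close> by blast
  with R X \<open>a < b\<close> \<open>b < c\<close> show ?thesis
    unfolding strict_linear_order_on_def by (metis less_irrefl order.strict_trans)
qed

lemma rankA_result_mono:
  assumes "finite V"
    and "\<And>v. v \<in> V \<Longrightarrow> active Att s' t v = active Att s t v"
    and "\<And>v. v \<in> V \<Longrightarrow> P v s t \<Longrightarrow> P v s' t"
    and "\<And>v. v \<in> V \<Longrightarrow> P v t s' \<Longrightarrow> P v t s"
  shows "rankA (result V Att P s t) \<le> rankA (result V Att P s' t)"
proof -
  have "votesA V Att P s t \<le> votesA V Att P s' t"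
    unfolding votesA_def by (rule card_mono) (use assms in auto)
  moreover have "votesB V Att P s' t \<le> votesB V Att P s t"
    unfolding votesB_def by (rule card_mono) (use assms in auto)
  ultimately show ?thesis
    unfolding result_def by auto
qed

lemma rankA_inject: "rankA o1 = rankA o2 \<longleftrightarrow> o1 = o2"
  by (cases o1; cases o2) auto

lemma nash_eq_preferred_deviation_A:
  assumes "nash_eq X V Att P RA RB s t" "s' \<in> X" "strict_of RA s' s"
  shows "rankA (result V Att P s' t) < rankA (result V Att P s t)"
  using assms rankA_inject[of "result V Att P s' t" "result V Att P s t"]
  unfolding nash_eq_def by force

theorem proposition2:
  fixes I :: "int set" and x :: "int \<Rightarrow> real" and X :: "real set"
    and p q :: int and RA RB :: "real \<Rightarrow> real \<Rightarrow> bool"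
    and V :: "'v set" and theta :: "'v \<Rightarrow> real"
    and P :: "'v \<Rightarrow> real \<Rightarrow> real \<Rightarrow> bool" and Att :: "'v \<Rightarrow> real set"
  assumes I_interval: "int_interval I"
    and x_mono: "\<And>i j. i \<in> I \<Longrightarrow> j \<in> I \<Longrightarrow> i < j \<Longrightarrow> x i < x j"
    and X_def: "X = x ` I"
    and pI: "p \<in> I" and qI: "q \<in> I" and pq: "p < q"
    and RA: "weak_order_on X RA" and RB: "weak_order_on X RB"
    and idealA: "unique_ideal X RA (x p)" and idealB: "unique_ideal X RB (x q)"
    and V_fin: "finite V"
    and theta: "\<And>v. v \<in> V \<Longrightarrow> theta v \<in> X"
    and P_lin: "\<And>v. v \<in> V \<Longrightarrow> strict_linear_order_on X (P v)"
    and P_sp: "\<And>v. v \<in> V \<Longrightarrow> single_peaked X (P v) (theta v)"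
    and Att_int: "\<And>v. v \<in> V \<Longrightarrow> order_interval X (Att v)"
    and Att_theta: "\<And>v. v \<in> V \<Longrightarrow> theta v \<in> Att v"
    and same_active: "\<exists>W \<subseteq> V. \<forall>s\<in>X. \<forall>t\<in>X. s \<noteq> t \<longrightarrow> {v \<in> V. active Att s t v} = W"
  shows "\<not> (\<exists>s t. nash_eq X V Att P RA RB s t \<and> t < x p \<and> x p < x q \<and> x q < s)"
proof
  assume "\<exists>s t. nash_eq X V Att P RA RB s t \<and> t < x p \<and> x p < x q \<and> x q < s"
  then obtain s t where ne: "nash_eq X V Att P RA RB s t" and "t < x p" "x p < s"
    by force
  have X: "s \<in> X" "t \<in> X" "x p \<in> X"
    using ne pI X_def unfolding nash_eq_def by auto
  have active_eq: "active Att (x p) t v = active Att s t v" if "v \<in> V" for v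
  proof -
    obtain W where "\<forall>s\<in>X. \<forall>t\<in>X. s \<noteq> t \<longrightarrow> {v \<in> V. active Att s t v} = W"
      using same_active by blast
    then have "{v \<in> V. active Att (x p) t v} = {v \<in> V. active Att s t v}"
      using X \<open>t < x p\<close> \<open>x p < s\<close> by auto
    then show ?thesis
      using that by blast
  qed
  have "rankA (result V Att P s t) \<le> rankA (result V Att P (x p) t)"
    by (rule rankA_result_mono)
      (use V_fin active_eq X \<open>t < x p\<close> \<open>x p < s\<close>
        single_peaked_prefer_intermediate[OF P_lin P_sp]
        single_peaked_prefer_over_farther[OF P_lin P_sp] in auto)
  moreover have "strict_of RA (x p) s"
    using idealA X \<open>x p < s\<close> unfolding unique_ideal_def by auto
  then have "rankA (result V Att P (x p) t) < rankA (result V Att P s t)"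
    using nash_eq_preferred_deviation_A[OF ne X(3)] by blast
  ultimately show False
    by simp
qed

end
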